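(* Let $A=\{a_n\}_{n\in\mathbb Z}\subset\mathbb R$ be an almost periodic set. Then there is a number $d>0$ such that for every $\eta>0$ there exists $N_\eta$ with the property that for every half-interval $I=[x,x+l)$ of length $l=l(I)>N_\eta$, $$\left|\frac{\#(A\cap I)}{l(I)}-d\right|<\eta.$$
   Context: A discrete locally finite multiset $A=\{a_n\}_{n\in\mathbb Z}\subset\mathbb R$ (a point may occur several times in the sequence) is called almost periodic if for every $\varepsilon>0$ the set of $\varepsilon$-almost periods $$E_\varepsilon=\{\tau\in\mathbb R:\ \exists\text{ a bijection }\sigma:\mathbb Z\to\mathbb Z\text{ with }\sup_n|a_n+\tau-a_{\sigma(n)}|<\varepsilon\}$$ is relatively dense, i.e. there is $L_\varepsilon>0$ such that $E_\varepsilon\cap(x,x+L_\varepsilon)\neq\emptyset$ for every $x\in\mathbb R$. $\#(A\cap H)$ denotes the number of indices $n$ with $a_n\in H$ (multiplicities counted). *)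

theory Defs
  imports "HOL-Analysis.Analysis"
begin

text \<open>A multiset of reals is given as a sequence a :: int => real (points may repeat).
  Locally finite: every bounded interval contains a_n for only finitely many indices n.\<close>
definition locally_finite_seq :: "(int \<Rightarrow> real) \<Rightarrow> bool" where
  "locally_finite_seq a \<longleftrightarrow> (\<forall>x y. finite {n. a n \<in> {x..y}})"

definition almost_periods :: "(int \<Rightarrow> real) \<Rightarrow> real \<Rightarrow> real set" where
  "almost_periods a \<epsilon> = {\<tau>. \<exists>\<sigma>. bij \<sigma> \<and>
      (\<exists>c<\<epsilon>. \<forall>n. \<bar>a n + \<tau> - a (\<sigma> n)\<bar> \<le> c)}"

definition relatively_dense :: "real set \<Rightarrow> bool" where
  "relatively_dense E \<longleftrightarrow> (\<exists>L>0. \<forall>x. E \<inter> {x<..<x+L} \<noteq> {})"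

definition almost_periodic_set :: "(int \<Rightarrow> real) \<Rightarrow> bool" where
  "almost_periodic_set a \<longleftrightarrow> (\<forall>\<epsilon>>0. relatively_dense (almost_periods a \<epsilon>))"

definition count_in :: "(int \<Rightarrow> real) \<Rightarrow> real set \<Rightarrow> nat" where
  "count_in a H = card {n. a n \<in> H}"

end

theory Submission
  imports Defs
begin

text \<open>
  Fix L such that \<open>1\<close>-almost periods occur in every open interval of length L. An almost period \<open>\<tau>\<close> with \<open>y - x < \<tau> < y - x + L\<close>
  maps the points of \<open>[x, x + l)\<close> injectively into \<open>[y - 1, y + l + L + 1)\<close>, and windows of bounded
  length contain boundedly many points; so the counts in any two windows of equal length differ by at
  most a constant K. Hence \<open>g l = #(A \<inter> [0, l))\<close> is monotone and quasi-additive,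
  \<open>\<bar>g (s + t) - g s - g t\<bar> \<le> K\<close>, and a Fekete-type argument yields d with \<open>\<bar>g l - d l\<bar> \<le> K\<close>.
  Every window then deviates from \<open>d l\<close> by at most 2K, and \<open>d > 0\<close> because almost periods carry
  the point \<open>a 0\<close> into every window of length \<open>L + 3\<close>.
\<close>

lemma locally_finite_seq_finite_preimage:
  assumes "locally_finite_seq a" "bounded S"
  shows "finite {n. a n \<in> S}"
proof -
  obtain r where "\<forall>x\<in>S. \<bar>x\<bar> \<le> r"
    using \<open>bounded S\<close> bounded_real by blast
  then have "{n. a n \<in> S} \<subseteq> {n. a n \<in> {-r..r}}"
    by (auto simp: abs_le_iff)
  moreover have "finite {n. a n \<in> {-r..r}}"
    using \<open>locally_finite_seq a\<close> unfolding locally_finite_seq_def by blast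
  ultimately show ?thesis
    by (rule finite_subset)
qed

lemma count_in_mono:
  assumes "locally_finite_seq a" "bounded T" "S \<subseteq> T"
  shows "count_in a S \<le> count_in a T"
  unfolding count_in_def using assms
  by (intro card_mono locally_finite_seq_finite_preimage) auto

lemma count_in_Un_disjoint:
  assumes "locally_finite_seq a" "bounded S" "bounded T" "S \<inter> T = {}"
  shows "count_in a (S \<union> T) = count_in a S + count_in a T"
proof -
  have "{n. a n \<in> S \<union> T} = {n. a n \<in> S} \<union> {n. a n \<in> T}"
    by auto
  then show ?thesis
    unfolding count_in_def using assms
    by (simp add: card_Un_disjoint locally_finite_seq_finite_preimage disjoint_iff)
qed

lemma count_in_split_interval:
  assumes "locally_finite_seq a" "x \<le> y" "y \<le> z"
  shows "count_in a {x..<z} = count_in a {x..<y} + count_in a {y..<z}"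
  using count_in_Un_disjoint[OF \<open>locally_finite_seq a\<close>, of "{x..<y}" "{y..<z}"]
    ivl_disj_un_two(3)[OF assms(2,3)]
  by auto

lemma count_in_le_shift:
  assumes "locally_finite_seq a" "\<tau> \<in> almost_periods a \<epsilon>" "bounded T"
    and "\<And>u v. u \<in> S \<Longrightarrow> \<bar>u + \<tau> - v\<bar> < \<epsilon> \<Longrightarrow> v \<in> T"
  shows "count_in a S \<le> count_in a T"
proof -
  obtain \<sigma> c where "bij \<sigma>" "c < \<epsilon>" and close: "\<And>n. \<bar>a n + \<tau> - a (\<sigma> n)\<bar> \<le> c"
    using \<open>\<tau> \<in> almost_periods a \<epsilon>\<close> unfolding almost_periods_def by blast
  have "\<sigma> ` {n. a n \<in> S} \<subseteq> {n. a n \<in> T}"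
    using close \<open>c < \<epsilon>\<close> assms(4) by (fastforce intro: le_less_trans)
  moreover have "inj_on \<sigma> {n. a n \<in> S}"
    using \<open>bij \<sigma>\<close> bij_is_inj inj_on_subset by blast
  ultimately show ?thesis
    unfolding count_in_def
    using card_inj_on_le locally_finite_seq_finite_preimage[OF assms(1,3)] by blast
qed

lemma almost_periodic_set_obtain_periods:
  assumes "almost_periodic_set a" "0 < \<epsilon>"
  obtains L where "0 < L" "\<And>x. \<exists>\<tau>\<in>almost_periods a \<epsilon>. x < \<tau> \<and> \<tau> < x + L"
  using assms unfolding almost_periodic_set_def relatively_dense_def by fastforce

lemma count_in_window_bounded:
  assumes "locally_finite_seq a" "almost_periodic_set a"
  obtains M where "\<And>x. count_in a {x..<x + h} \<le> M"
proof -
  obtain L where "0 < L" and L: "\<And>x. \<exists>\<tau>\<in>almost_periods a 1. x < \<tau> \<and> \<tau> < x + L"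
    using almost_periodic_set_obtain_periods[OF assms(2) zero_less_one] by blast
  have "count_in a {x..<x + h} \<le> count_in a {-1..<L + h + 1}" for x
  proof -
    obtain \<tau> where "\<tau> \<in> almost_periods a 1" "-x < \<tau>" "\<tau> < -x + L"
      using L[of "-x"] by blast
    then show ?thesis
      by (intro count_in_le_shift[OF assms(1)]) (auto simp: abs_less_iff)
  qed
  then show ?thesis using that by blast
qed

lemma count_in_window_translate_le:
  assumes "locally_finite_seq a" "almost_periodic_set a"
  obtains K where "\<And>x y l. 0 \<le> l \<Longrightarrow> count_in a {x..<x + l} \<le> count_in a {y..<y + l} + K"
proof -
  obtain L where "0 < L" and L: "\<And>x. \<exists>\<tau>\<in>almost_periods a 1. x < \<tau> \<and> \<tau> < x + L"
    using almost_periodic_set_obtain_periods[OF assms(2) zero_less_one] by blast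
  obtain M\<^sub>1 where M\<^sub>1: "\<And>x. count_in a {x..<x + 1} \<le> M\<^sub>1"
    using count_in_window_bounded[OF assms] by blast
  obtain M\<^sub>2 where M\<^sub>2: "\<And>x. count_in a {x..<x + (L + 1)} \<le> M\<^sub>2"
    using count_in_window_bounded[OF assms] by blast
  have "count_in a {x..<x + l} \<le> count_in a {y..<y + l} + (M\<^sub>1 + M\<^sub>2)" if "0 \<le> l" for x y l
  proof -
    obtain \<tau> where "\<tau> \<in> almost_periods a 1" "y - x < \<tau>" "\<tau> < y - x + L"
      using L[of "y - x"] by blast
    then have "count_in a {x..<x + l} \<le> count_in a {y - 1..<y + l + (L + 1)}"
      by (intro count_in_le_shift[OF assms(1)]) (auto simp: abs_less_iff)
    also have "\<dots> = count_in a {y - 1..<y} + count_in a {y..<y + l}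
        + count_in a {y + l..<y + l + (L + 1)}"
      using count_in_split_interval[OF assms(1), of "y - 1" y "y + l + (L + 1)"]
        count_in_split_interval[OF assms(1), of y "y + l" "y + l + (L + 1)"] \<open>0 \<le> l\<close> \<open>0 < L\<close>
      by simp
    also have "\<dots> \<le> M\<^sub>1 + count_in a {y..<y + l} + M\<^sub>2"
      using M\<^sub>1[of "y - 1"] M\<^sub>2[of "y + l"] by simp
    finally show ?thesis by simp
  qed
  then show ?thesis using that by blast
qed

lemma count_in_window_pos:
  assumes "locally_finite_seq a" "almost_periodic_set a"
  obtains P where "0 < P" "\<And>x. 1 \<le> count_in a {x..<x + P}"
proof -
  obtain L where "0 < L" and L: "\<And>x. \<exists>\<tau>\<in>almost_periods a 1. x < \<tau> \<and> \<tau> < x + L"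
    using almost_periodic_set_obtain_periods[OF assms(2) zero_less_one] by blast
  have "1 \<le> count_in a {x..<x + (L + 3)}" for x
  proof -
    obtain \<tau> where "\<tau> \<in> almost_periods a 1" "x + 1 - a 0 < \<tau>" "\<tau> < x + 1 - a 0 + L"
      using L by blast
    have "1 \<le> count_in a {a 0}"
      unfolding count_in_def
      using locally_finite_seq_finite_preimage[OF assms(1), of "{a 0}"]
      by (auto simp: Suc_le_eq card_gt_0_iff)
    also have "\<dots> \<le> count_in a {x..<x + (L + 3)}"
      using \<open>\<tau> \<in> almost_periods a 1\<close> \<open>x + 1 - a 0 < \<tau>\<close> \<open>\<tau> < x + 1 - a 0 + L\<close>
      by (intro count_in_le_shift[OF assms(1)]) (auto simp: abs_less_iff)
    finally show ?thesis .
  qed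
  then show ?thesis using that \<open>0 < L\<close> by (meson add_pos_pos zero_less_numeral)
qed

lemma count_in_ge_multiple:
  assumes "locally_finite_seq a" "0 \<le> P" "\<And>x. 1 \<le> count_in a {x..<x + P}"
  shows "n \<le> count_in a {x..<x + real n * P}"
proof (induction n)
  case 0
  then show ?case by simp
next
  case (Suc n)
  have "count_in a {x..<x + real (Suc n) * P}
      = count_in a {x..<x + real n * P} + count_in a {x + real n * P..<x + real n * P + P}"
    using count_in_split_interval[OF assms(1)] \<open>0 \<le> P\<close> by (simp add: algebra_simps)
  then show ?case
    using Suc.IH assms(3)[of "x + real n * P"] by simp
qed

lemma quasi_additive_multiple_bounds:
  fixes g :: "real \<Rightarrow> real"
  assumes quasi: "\<And>s t. 0 \<le> s \<Longrightarrow> 0 \<le> t \<Longrightarrow> \<bar>g (s + t) - g s - g t\<bar> \<le> K"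
    and "0 \<le> l" "1 \<le> n"
  shows "real n * (g l - K) \<le> g (real n * l) \<and> g (real n * l) \<le> real n * (g l + K)"
  using \<open>1 \<le> n\<close>
proof (induction n rule: dec_induct)
  case base
  have "0 \<le> K" using quasi[of 0 0] by linarith
  then show ?case by simp
next
  case (step n)
  have "\<bar>g (real n * l + l) - g (real n * l) - g l\<bar> \<le> K"
    using quasi \<open>0 \<le> l\<close> by simp
  moreover have "real (Suc n) * l = real n * l + l" by (simp add: algebra_simps)
  ultimately show ?case using step.IH by (auto simp: algebra_simps abs_le_iff)
qed

lemma quasi_additive_slope_le:
  fixes g :: "real \<Rightarrow> real"
  assumes mono: "mono_on {0..} g"
    and quasi: "\<And>s t. 0 \<le> s \<Longrightarrow> 0 \<le> t \<Longrightarrow> \<bar>g (s + t) - g s - g t\<bar> \<le> K"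
    and "0 < l" "0 < m"
  shows "(g m - K) / m \<le> (g l + K) / l"
proof (rule LIMSEQ_le_const)
  show "(\<lambda>N. (g l + K) / l + (g l + K) / m / real N) \<longlonglongrightarrow> (g l + K) / l"
    using tendsto_add[OF tendsto_const lim_const_over_n, of "(g l + K) / l" "(g l + K) / m"]
    by simp
  have "0 \<le> g l + K"
    using quasi[of 0 0] mono_onD[OF mono, of 0 l] \<open>0 < l\<close> by simp
  have "(g m - K) / m \<le> (g l + K) / l + (g l + K) / m / real N" if "1 \<le> N" for N
  proof -
    define k where "k = nat \<lceil>real N * m / l\<rceil>"
    have "0 < real N * m / l"
      using \<open>0 < l\<close> \<open>0 < m\<close> \<open>1 \<le> N\<close> by simp
    then have "real k = of_int \<lceil>real N * m / l\<rceil>"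
      by (simp add: k_def)
    then have "real N * m / l \<le> real k" and "real k \<le> real N * m / l + 1"
      using le_of_int_ceiling of_int_ceiling_le_add_one by metis+
    have "real N * m \<le> real k * l"
      using \<open>real N * m / l \<le> real k\<close> \<open>0 < l\<close> by (simp add: field_simps)
    have "0 < real k"
      using \<open>0 < real N * m / l\<close> \<open>real N * m / l \<le> real k\<close> by linarith
    then have "1 \<le> k" by simp
    have "real N * (g m - K) \<le> g (real N * m)"
      using quasi_additive_multiple_bounds[OF quasi] \<open>0 < m\<close> \<open>1 \<le> N\<close> by simp
    also have "\<dots> \<le> g (real k * l)"
      using mono_onD[OF mono] \<open>real N * m \<le> real k * l\<close> \<open>0 < m\<close> by simp
    also have "\<dots> \<le> real k * (g l + K)"
      using quasi_additive_multiple_bounds[OF quasi] \<open>0 < l\<close> \<open>1 \<le> k\<close> by simp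
    also have "\<dots> \<le> (real N * m / l + 1) * (g l + K)"
      using \<open>real k \<le> real N * m / l + 1\<close> \<open>0 \<le> g l + K\<close> by (rule mult_right_mono)
    finally have "real N * (g m - K) / (real N * m) \<le> (real N * m / l + 1) * (g l + K) / (real N * m)"
      using \<open>0 < m\<close> by (intro divide_right_mono) simp_all
    moreover have "real N * (g m - K) / (real N * m) = (g m - K) / m"
      using \<open>1 \<le> N\<close> by simp
    moreover have "(real N * m / l + 1) * (g l + K) / (real N * m)
        = (g l + K) / l + (g l + K) / m / real N"
      using \<open>0 < l\<close> \<open>0 < m\<close> \<open>1 \<le> N\<close> by (simp add: field_simps)
    ultimately show ?thesis by simp
  qed
  then show "\<exists>N. \<forall>n\<ge>N. (g m - K) / m \<le> (g l + K) / l + (g l + K) / m / real n"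
    by blast
qed

lemma quasi_additive_linear_approx:
  fixes g :: "real \<Rightarrow> real"
  assumes mono: "mono_on {0..} g"
    and quasi: "\<And>s t. 0 \<le> s \<Longrightarrow> 0 \<le> t \<Longrightarrow> \<bar>g (s + t) - g s - g t\<bar> \<le> K"
  obtains d where "\<And>l. 0 < l \<Longrightarrow> \<bar>g l - d * l\<bar> \<le> K"
proof
  define d where "d = (INF l\<in>{0<..}. (g l + K) / l)"
  fix l :: real
  assume "0 < l"
  have "d \<le> (g l + K) / l"
    unfolding d_def using \<open>0 < l\<close> quasi_additive_slope_le[OF mono quasi _ zero_less_one]
    by (intro cINF_lower bdd_belowI2[where m = "g 1 - K"]) auto
  moreover have "(g l - K) / l \<le> d"
    unfolding d_def using \<open>0 < l\<close> quasi_additive_slope_le[OF mono quasi]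
    by (intro cINF_greatest) auto
  ultimately show "\<bar>g l - d * l\<bar> \<le> K"
    using \<open>0 < l\<close> by (simp add: field_simps abs_le_iff)
qed

lemma almost_periodic_set_count_in_linear_approx:
  assumes "locally_finite_seq a" "almost_periodic_set a"
  obtains d C where "0 < d" "\<And>x l. 0 < l \<Longrightarrow> \<bar>real (count_in a {x..<x + l}) - d * l\<bar> \<le> C"
proof -
  obtain K where K: "\<And>x y l. 0 \<le> l \<Longrightarrow> count_in a {x..<x + l} \<le> count_in a {y..<y + l} + K"
    using count_in_window_translate_le[OF assms] by blast
  have translate: "\<bar>real (count_in a {x..<x + l}) - real (count_in a {y..<y + l})\<bar> \<le> K"
    if "0 \<le> l" for x y l
    using K[OF that, of x y] K[OF that, of y x] by (simp add: abs_le_iff)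
  define g where "g l = real (count_in a {0..<l})" for l
  have "mono_on {0..} g"
    unfolding g_def using count_in_mono[OF assms(1)] by (intro mono_onI) auto
  moreover have "\<bar>g (s + t) - g s - g t\<bar> \<le> K" if "0 \<le> s" "0 \<le> t" for s t
  proof -
    have "g (s + t) = g s + real (count_in a {s..<s + t})"
      using count_in_split_interval[OF assms(1), of 0 s "s + t"] that by (simp add: g_def)
    then show ?thesis
      using translate[OF \<open>0 \<le> t\<close>, of s 0] by (simp add: g_def)
  qed
  ultimately obtain d where d: "\<And>l. 0 < l \<Longrightarrow> \<bar>g l - d * l\<bar> \<le> K"
    using quasi_additive_linear_approx by blast
  obtain P where "0 < P" "\<And>x. 1 \<le> count_in a {x..<x + P}"
    using count_in_window_pos[OF assms] by blast
  define m where "m = real (K + 1) * P"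
  have "0 < m"
    using \<open>0 < P\<close> by (simp add: m_def)
  have "K + 1 \<le> count_in a {0..<m}"
    using count_in_ge_multiple[OF assms(1), of P "K + 1" 0] \<open>0 < P\<close>
      \<open>\<And>x. 1 \<le> count_in a {x..<x + P}\<close>
    by (simp add: m_def)
  then have "real (K + 1) \<le> g m"
    by (simp add: g_def)
  then have "0 < d * m"
    using d[OF \<open>0 < m\<close>] by (simp add: abs_le_iff)
  then have "0 < d"
    using \<open>0 < m\<close> by (simp add: zero_less_mult_iff)
  moreover have "\<bar>real (count_in a {x..<x + l}) - d * l\<bar> \<le> 2 * K" if "0 < l" for x l
    using translate[of l x 0] d[OF that] that by (simp add: g_def abs_le_iff)
  ultimately show ?thesis
    using that by blast
qed

lemma bounded_discrepancy_imp_uniform_density: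
  fixes c :: "real \<Rightarrow> real \<Rightarrow> real"
  assumes discrepancy: "\<And>x l. 0 < l \<Longrightarrow> \<bar>c x l - d * l\<bar> \<le> C" and "0 < \<eta>"
  shows "\<exists>N. \<forall>x l. N < l \<longrightarrow> \<bar>c x l / l - d\<bar> < \<eta>"
proof (intro exI allI impI)
  fix x l
  assume "\<bar>C\<bar> / \<eta> < l"
  moreover have "0 \<le> \<bar>C\<bar> / \<eta>"
    using \<open>0 < \<eta>\<close> by simp
  ultimately have "0 < l"
    by linarith
  have "\<bar>C\<bar> < \<eta> * l"
    using \<open>\<bar>C\<bar> / \<eta> < l\<close> \<open>0 < \<eta>\<close> by (simp add: pos_divide_less_eq mult.commute)
  have "\<bar>c x l / l - d\<bar> = \<bar>c x l - d * l\<bar> / l"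
    using \<open>0 < l\<close> by (simp add: field_simps)
  also have "\<dots> \<le> \<bar>C\<bar> / l"
    using discrepancy[OF \<open>0 < l\<close>, of x] \<open>0 < l\<close> by (simp add: divide_right_mono)
  also have "\<dots> < \<eta>"
    using \<open>\<bar>C\<bar> < \<eta> * l\<close> \<open>0 < l\<close> by (simp add: field_simps)
  finally show "\<bar>c x l / l - d\<bar> < \<eta>" .
qed

theorem proposition3:
  fixes a :: "int \<Rightarrow> real"
  assumes "locally_finite_seq a"
    and "almost_periodic_set a"
  shows "\<exists>d>0. \<forall>\<eta>>0. \<exists>N. \<forall>x l. l > N \<longrightarrow>
           \<bar>real (count_in a {x..<x+l}) / l - d\<bar> < \<eta>"
proof -
  obtain d C where "0 < d"
    and "\<And>x l. 0 < l \<Longrightarrow> \<bar>real (count_in a {x..<x + l}) - d * l\<bar> \<le> C"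
    using almost_periodic_set_count_in_linear_approx[OF assms] by blast
  then show ?thesis
    using bounded_discrepancy_imp_uniform_density[where c = "\<lambda>x l. real (count_in a {x..<x + l})"]
    by blast
qed

end
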